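(* Consider the stochastic variant of Algorithm PDS-SPP described in the context, in which $y_k$ is computed as in PDS-SPP and the $x$-update uses a random vector $v_k$ in place of $y_k$, where conditionally on all randomness prior to iteration $k$, $\mathbb E[v_k]=y_k$ and $\mathbb E[\|v_k-y_k\|_*^2]\le\sigma_k^2$. Suppose $$\tau_1=0,\quad\beta_k\tau_k\le\beta_{k-1}(\tau_{k-1}+1),\quad\beta_{k-1}=\beta_k\lambda_k,\quad2\tilde L\lambda_k\le p_{k-1}\tau_k\quad\text{for all }k\ge2.$$ Let $$A=\sum_{k=1}^N\beta_k\Big[-\langle\hat x_k,y\rangle+\langle x,y_k\rangle+\langle v_k,\hat x_k-x\rangle-\tilde f^*(y_k)+\tilde f^*(y)+\frac{p_k}{T_k}\sum_{t=1}^{T_k}V(x_{k-1},x_k^t)\Big].$$ Then for all fixed $(x,y)\in\mathcal X\times\mathcal Y$, $$\mathbb E[A]\ge\mathbb E\Big[-\beta_N\langle x_{N-1}-\hat x_N,y_N-y\rangle+\frac{\beta_Np_N}{4}\|x_{N-1}-\hat x_N\|^2-\sum_{k=1}^N\frac{\beta_k\sigma_k^2}{p_k}+\beta_N(\tau_N+1)W(y_N,y)\Big].$$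
   Context: Setting. $\mathcal X$ closed convex subset of a finite-dimensional space with norm $\|\cdot\|$ (dual $\|\cdot\|_*$); $\mathcal Z$ closed convex with norm $|\cdot|$; $\mathcal A$ linear; $h$ convex on $\mathcal Z$; $\mu\ge0$; $\nu$ $1$-strongly convex on $\mathcal X$ w.r.t. $\|\cdot\|$; $\tilde f$ convex differentiable with $\tilde L$-Lipschitz gradient w.r.t. $\|\cdot\|$; $\tilde f^*$ its conjugate, $\mathcal Y=\mathrm{dom}\,\tilde f^*$; $\zeta$ $1$-strongly convex on $\mathcal Z$. $U,V,W$ are the Bregman functions of $\zeta,\nu,\tilde f^*$, e.g. $V(\hat x,x)=\nu(x)-\nu(\hat x)-\langle\nu'(\hat x),x-\hat x\rangle$, $W(v,y)=\tilde f^*(y)-\tilde f^*(v)-\langle(\tilde f^* )'(v),y-v\rangle$. Stochastic PDS-SPP: $x_0\in\mathcal X$, $y_0\in\mathcal Y$, $z_0\in\mathcal Z$, $\hat x_0=x_{-1}=x_0$; for $k=1,\dots,N$: $\tilde x_k=x_{k-1}+\lambda_k(\hat x_{k-1}-x_{k-2})$, $y_k=\arg\min_{y\in\mathcal Y}\langle-\tilde x_k,y\rangle+\tilde f^*(y)+\tau_kW(y_{k-1},y)$, random $v_k$ as in the claim; $x_k^0=x_{k-1}$, $z_k^0=z_{k-1}$, $x_k^{-1}=x_{k-1}^{T_{k-1}-1}$ ($x_1^{-1}=x_0$); for $t=1,\dots,T_k$: $\tilde u_k^t=x_k^{t-1}+\alpha_k^t(x_k^{t-1}-x_k^{t-2})$,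 $z_k^t=\arg\min_{z\in\mathcal Z}h(z)+\langle-\mathcal A\tilde u_k^t,z\rangle+q_k^tU(z_k^{t-1},z)$, $x_k^t=\arg\min_{x\in\mathcal X}\mu\nu(x)+\langle v_k+\mathcal A^\top z_k^t,x\rangle+\eta_k^tV(x_k^{t-1},x)+p_kV(x_{k-1},x)$; $x_k=x_k^{T_k}$, $z_k=z_k^{T_k}$, $\hat x_k=\frac1{T_k}\sum_tx_k^t$. Parameters: positive integers $T_k$, positive $\beta_k,p_k,q_k^t,\eta_k^t$, nonnegative $\lambda_k,\tau_k,\alpha_k^t$. *)

theory Defs
  imports "HOL-Analysis.Analysis" "HOL-Probability.Probability"
begin

definition is_norm :: "('a::real_vector \<Rightarrow> real) \<Rightarrow> bool" where
  "is_norm n \<longleftrightarrow> (\<forall>x. n x = 0 \<longleftrightarrow> x = 0) \<and> (\<forall>x y. n (x + y) \<le> n x + n y)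
                 \<and> (\<forall>c x. n (c *\<^sub>R x) = \<bar>c\<bar> * n x)"

text \<open>Dual norm, the dual space being identified with the space via the inner product.\<close>
definition dual_norm :: "('a::real_inner \<Rightarrow> real) \<Rightarrow> 'a \<Rightarrow> real" where
  "dual_norm n w = Sup {w \<bullet> u | u. n u \<le> 1}"

definition strongly_convex_wrt :: "'a::real_vector set \<Rightarrow> ('a \<Rightarrow> real) \<Rightarrow> real \<Rightarrow> ('a \<Rightarrow> real) \<Rightarrow> bool" where
  "strongly_convex_wrt S n c phi \<longleftrightarrow> convex S \<and>
     (\<forall>x\<in>S. \<forall>y\<in>S. \<forall>\<theta>::real. 0 \<le> \<theta> \<and> \<theta> \<le> 1 \<longrightarrow>
        phi (\<theta> *\<^sub>R x + (1 - \<theta>) *\<^sub>R y) \<le> \<theta> * phi x + (1 - \<theta>) * phi y - c / 2 * \<theta> * (1 - \<theta>) * (n (x - y))\<^sup>2)"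

definition is_subgrad :: "'a::real_inner set \<Rightarrow> ('a \<Rightarrow> real) \<Rightarrow> 'a \<Rightarrow> 'a \<Rightarrow> bool" where
  "is_subgrad S phi a g \<longleftrightarrow> (\<forall>x\<in>S. phi x \<ge> phi a + g \<bullet> (x - a))"

definition bregman :: "('a::real_inner \<Rightarrow> real) \<Rightarrow> 'a \<Rightarrow> 'a \<Rightarrow> 'a \<Rightarrow> real" where
  "bregman phi g a b = phi b - phi a - g \<bullet> (b - a)"

text \<open>Domain of the Fenchel conjugate of f, and the conjugate itself (finite on that domain).\<close>
definition conj_dom :: "('a::real_inner \<Rightarrow> real) \<Rightarrow> 'a set" where
  "conj_dom f = {y. bdd_above (range (\<lambda>x. y \<bullet> x - f x))}"

definition conj_fun :: "('a::real_inner \<Rightarrow> real) \<Rightarrow> 'a \<Rightarrow> real" where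
  "conj_fun f y = (SUP x. y \<bullet> x - f x)"

end

theory Submission
  imports Defs
begin

(* The optimality condition of the Bregman proximal step defining y_k gives a three-point identity
   that writes beta_k times the k-th summand as the increment of the potential
     -beta_k <x_{k-1} - xhat_k, y_k - y> + beta_k p_k/4 ||x_{k-1} - xhat_k||^2 + beta_k (tau_k + 1) W(y_k, y)
   plus three error terms. The extrapolation term beta_{k-1} <xhat_{k-1} - x_{k-2}, y_k - y_{k-1}> is paid
   for by beta_k tau_k W(y_{k-1}, y_k): smoothness of f gives W(y', y) >= <y - y', e> - L/2 ||e||^2 for
   every e, and the step condition 2 L lambda_k <= p_{k-1} tau_k makes this enough. Strong convexity of nu
   and Jensen's inequality give (p_k/T_k) sum_t V(x_{k-1}, x_k^t) >= p_k/2 ||x_{k-1} - xhat_k||^2, which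
   absorbs the noise term <v_k - y_k, xhat_k - x_{k-1}> by Young's inequality at the price
   ||v_k - y_k||_*^2 / p_k. The other noise term <v_k - y_k, x_{k-1} - x> has mean zero because x_{k-1}
   is known before iteration k. Telescoping and taking expectations gives the claim. *)

section \<open>Norms and dual norms\<close>

context
  fixes n :: "'a::real_vector \<Rightarrow> real"
  assumes n: "is_norm n"
begin

lemma is_norm_scaleR: "n (c *\<^sub>R x) = \<bar>c\<bar> * n x"
  using n unfolding is_norm_def by blast

lemma is_norm_triangle: "n (x + y) \<le> n x + n y"
  using n unfolding is_norm_def by blast

lemma is_norm_eq_0_iff: "n x = 0 \<longleftrightarrow> x = 0"
  using n unfolding is_norm_def by blast

lemma is_norm_zero [simp]: "n 0 = 0"
  by (simp add: is_norm_eq_0_iff)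

lemma is_norm_minus: "n (- x) = n x"
  using is_norm_scaleR[of "-1" x] by simp

lemma is_norm_minus_commute: "n (x - y) = n (y - x)"
  using is_norm_minus[of "x - y"] by simp

lemma is_norm_nonneg: "0 \<le> n x"
  using is_norm_triangle[of x "- x"] is_norm_minus[of x] by simp

lemma is_norm_pos: "x \<noteq> 0 \<Longrightarrow> 0 < n x"
  using is_norm_nonneg[of x] is_norm_eq_0_iff[of x] by linarith

lemma is_norm_diff_abs: "\<bar>n x - n y\<bar> \<le> n (x - y)"
  using is_norm_triangle[of "x - y" y] is_norm_triangle[of "y - x" x] is_norm_minus_commute[of x y]
  by simp

lemma is_norm_sum: "n (\<Sum>i\<in>S. z i) \<le> (\<Sum>i\<in>S. n (z i))"
  by (induction S rule: infinite_finite_induct) (auto intro: order_trans[OF is_norm_triangle])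

lemma is_norm_average_sq_le:
  assumes "0 < T"
  shows "(n ((1 / real T) *\<^sub>R (\<Sum>t=1..T. z t) - c))\<^sup>2 \<le> 1 / real T * (\<Sum>t=1..T. (n (z t - c))\<^sup>2)"
proof -
  have "(\<Sum>t=1..T. z t - c) = (\<Sum>t=1..T. z t) - real T *\<^sub>R c"
    by (simp add: sum_subtractf sum_constant_scaleR)
  then have "(1 / real T) *\<^sub>R (\<Sum>t=1..T. z t) - c = (1 / real T) *\<^sub>R (\<Sum>t=1..T. z t - c)"
    using assms by (simp add: scaleR_diff_right)
  then have "n ((1 / real T) *\<^sub>R (\<Sum>t=1..T. z t) - c) \<le> 1 / real T * (\<Sum>t=1..T. n (z t - c))"
    by (simp add: is_norm_scaleR divide_right_mono is_norm_sum)
  then have "(n ((1 / real T) *\<^sub>R (\<Sum>t=1..T. z t) - c))\<^sup>2 \<le> (1 / real T)\<^sup>2 * (\<Sum>t=1..T. n (z t - c))\<^sup>2"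
    by (metis is_norm_nonneg power_mono power_mult_distrib)
  also have "\<dots> \<le> (1 / real T)\<^sup>2 * ((\<Sum>t=1..T. (n (z t - c))\<^sup>2) * card {1..T})"
    by (intro mult_left_mono sum_squared_le_sum_of_squares) auto
  also have "\<dots> = 1 / real T * (\<Sum>t=1..T. (n (z t - c))\<^sup>2)"
    using assms by (simp add: power2_eq_square)
  finally show ?thesis .
qed

end

lemma mult_le_young:
  fixes a b p :: real
  assumes "0 < p"
  shows "a * b \<le> a\<^sup>2 / p + p / 4 * b\<^sup>2"
proof -
  have "a\<^sup>2 / p + p / 4 * b\<^sup>2 - a * b = (a - p / 2 * b)\<^sup>2 / p"
    using assms by (simp add: field_simps power2_eq_square)
  then show ?thesis using assms by (metis diff_ge_0_iff_ge divide_nonneg_pos zero_le_power2)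
qed

context
  fixes n :: "'a::euclidean_space \<Rightarrow> real"
  assumes n: "is_norm n"
begin

lemma is_norm_le_norm: "n u \<le> (\<Sum>b\<in>Basis. n b) * norm u"
proof -
  have "n u \<le> (\<Sum>b\<in>Basis. n ((u \<bullet> b) *\<^sub>R b))"
    using is_norm_sum[OF n] by (metis euclidean_representation)
  also have "\<dots> \<le> (\<Sum>b\<in>Basis. norm u * n b)"
    by (intro sum_mono) (simp add: is_norm_scaleR[OF n] Basis_le_norm is_norm_nonneg[OF n] mult_right_mono)
  finally show ?thesis by (simp add: sum_distrib_left mult.commute)
qed

lemma norm_le_is_norm: "\<exists>C>0. \<forall>u. norm u \<le> C * n u"
proof -
  have "(\<Sum>b\<in>Basis. n b)-lipschitz_on (sphere 0 1) n"
  proof (rule lipschitz_onI)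
    show "dist (n u) (n w) \<le> (\<Sum>b\<in>Basis. n b) * dist u w" for u w
      using is_norm_diff_abs[OF n, of u w] is_norm_le_norm[of "u - w"]
      by (simp add: dist_real_def dist_norm)
  qed (simp add: sum_nonneg is_norm_nonneg[OF n])
  then have "continuous_on (sphere 0 1) n"
    by (rule lipschitz_on_continuous_on)
  moreover have "sphere (0::'a) 1 \<noteq> {}"
    by simp
  ultimately obtain u0 where u0: "u0 \<in> sphere 0 1" and min: "\<And>u. u \<in> sphere 0 1 \<Longrightarrow> n u0 \<le> n u"
    using continuous_attains_inf[OF compact_sphere] by blast
  have "0 < n u0"
    using u0 by (intro is_norm_pos[OF n]) auto
  have "norm u \<le> 1 / n u0 * n u" for u
  proof (cases "u = 0")
    case False
    then have "n u0 \<le> n ((1 / norm u) *\<^sub>R u)"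
      by (intro min) simp
    then show ?thesis
      using False \<open>0 < n u0\<close> by (simp add: is_norm_scaleR[OF n] field_simps)
  qed (simp add: is_norm_zero[OF n])
  then show ?thesis
    using \<open>0 < n u0\<close> by (intro exI[of _ "1 / n u0"]) auto
qed

lemma inner_le_dual_norm: "w \<bullet> u \<le> dual_norm n w * n u"
proof -
  obtain C where "0 < C" and C: "\<And>u. norm u \<le> C * n u"
    using norm_le_is_norm by blast
  have "bdd_above {w \<bullet> u | u. n u \<le> 1}"
  proof (rule bdd_aboveI)
    fix r assume "r \<in> {w \<bullet> u | u. n u \<le> 1}"
    then obtain u where "r = w \<bullet> u" and "n u \<le> 1" by blast
    then have "r \<le> norm w * (C * n u)"
      using norm_cauchy_schwarz[of w u] C[of u] by (metis mult_left_mono norm_ge_zero order_trans)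
    also have "\<dots> \<le> norm w * C"
      using \<open>n u \<le> 1\<close> \<open>0 < C\<close> by (simp add: mult_left_mono)
    finally show "r \<le> norm w * C" .
  qed
  then have upper: "w \<bullet> u \<le> dual_norm n w" if "n u \<le> 1" for u
    unfolding dual_norm_def using that by (intro cSup_upper) auto
  show ?thesis
  proof (cases "u = 0")
    case False
    then have "0 < n u"
      by (rule is_norm_pos[OF n])
    then have "w \<bullet> ((1 / n u) *\<^sub>R u) \<le> dual_norm n w"
      by (intro upper) (simp add: is_norm_scaleR[OF n])
    then show ?thesis
      using \<open>0 < n u\<close> by (simp add: field_simps)
  qed (simp add: is_norm_zero[OF n])
qed

lemma inner_ge_young:
  assumes "0 < p"
  shows "- ((dual_norm n w)\<^sup>2 / p) - p / 4 * (n u)\<^sup>2 \<le> w \<bullet> u"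
  using inner_le_dual_norm[of w "- u"] mult_le_young[OF assms, of "dual_norm n w" "n u"]
  by (simp add: is_norm_minus[OF n])

end

section \<open>Smooth convex functions, conjugates and Bregman distances\<close>

lemma line_has_real_derivative:
  fixes f :: "'a::real_inner \<Rightarrow> real"
  assumes f_deriv: "\<And>a. (f has_derivative (\<lambda>d. gf a \<bullet> d)) (at a)"
  shows "((\<lambda>t. f (a + t *\<^sub>R d)) has_real_derivative gf (a + t *\<^sub>R d) \<bullet> d) (at t)"
proof -
  have "((\<lambda>t. a + t *\<^sub>R d) has_derivative (\<lambda>h. h *\<^sub>R d)) (at t)"
    by (auto intro!: derivative_eq_intros)
  from has_derivative_compose[OF this f_deriv]
  have "((\<lambda>t. f (a + t *\<^sub>R d)) has_derivative (\<lambda>h. gf (a + t *\<^sub>R d) \<bullet> (h *\<^sub>R d))) (at t)" .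
  moreover have "(\<lambda>h. gf (a + t *\<^sub>R d) \<bullet> (h *\<^sub>R d)) = (*) (gf (a + t *\<^sub>R d) \<bullet> d)"
    by (auto simp: mult.commute)
  ultimately show ?thesis
    by (simp add: has_field_derivative_def)
qed

lemma convex_on_gradient_ineq:
  fixes f :: "'a::real_inner \<Rightarrow> real"
  assumes f_convex: "convex_on UNIV f" and f_deriv: "\<And>a. (f has_derivative (\<lambda>d. gf a \<bullet> d)) (at a)"
  shows "f a + gf a \<bullet> (u - a) \<le> f u"
proof -
  define phi where "phi t = f (a + t *\<^sub>R (u - a))" for t :: real
  have "convex_on UNIV phi"
  proof (rule convex_onI)
    fix t s r :: real assume "0 < t" "t < 1"
    have "a + ((1 - t) * s + t * r) *\<^sub>R (u - a)
        = (1 - t) *\<^sub>R (a + s *\<^sub>R (u - a)) + t *\<^sub>R (a + r *\<^sub>R (u - a))"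
      by (simp add: algebra_simps)
    then show "phi ((1 - t) *\<^sub>R s + t *\<^sub>R r) \<le> (1 - t) * phi s + t * phi r"
      unfolding phi_def using convex_onD[OF f_convex, of t] \<open>0 < t\<close> \<open>t < 1\<close> by simp
  qed simp
  moreover have "(phi has_real_derivative gf a \<bullet> (u - a)) (at 0 within UNIV)"
    unfolding phi_def using line_has_real_derivative[OF f_deriv, of a "u - a" 0] by simp
  ultimately have "gf a \<bullet> (u - a) * (1 - 0) \<le> phi 1 - phi 0"
    by (intro convex_on_imp_above_tangent[where A = UNIV]) auto
  then show ?thesis
    unfolding phi_def by simp
qed

lemma lipschitz_gradient_descent_ineq:
  fixes f :: "'a::euclidean_space \<Rightarrow> real"
  assumes n: "is_norm n" and f_deriv: "\<And>a. (f has_derivative (\<lambda>d. gf a \<bullet> d)) (at a)"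
    and gf_lipschitz: "\<And>a b. dual_norm n (gf a - gf b) \<le> L * n (a - b)"
  shows "f (a + e) \<le> f a + gf a \<bullet> e + L / 2 * (n e)\<^sup>2"
proof -
  define phi where "phi t = f (a + t *\<^sub>R e) - t * (gf a \<bullet> e) - L / 2 * t\<^sup>2 * (n e)\<^sup>2" for t :: real
  have "phi 1 \<le> phi 0"
  proof (rule DERIV_nonpos_imp_nonincreasing[of 0 1 phi])
    fix t :: real assume "0 \<le> t" "t \<le> 1"
    have deriv: "(phi has_real_derivative gf (a + t *\<^sub>R e) \<bullet> e - gf a \<bullet> e - L / 2 * (2 * t) * (n e)\<^sup>2) (at t)"
      unfolding phi_def by (auto intro!: derivative_eq_intros line_has_real_derivative[OF f_deriv])
    have "(gf (a + t *\<^sub>R e) - gf a) \<bullet> e \<le> dual_norm n (gf (a + t *\<^sub>R e) - gf a) * n e"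
      by (rule inner_le_dual_norm[OF n])
    also have "\<dots> \<le> L * n (t *\<^sub>R e) * n e"
      using gf_lipschitz[of "a + t *\<^sub>R e" a] by (simp add: mult_right_mono is_norm_nonneg[OF n])
    also have "\<dots> = L * t * (n e)\<^sup>2"
      using \<open>0 \<le> t\<close> by (simp add: is_norm_scaleR[OF n] power2_eq_square)
    finally show "\<exists>y. (phi has_real_derivative y) (at t) \<and> y \<le> 0"
      using deriv by (intro exI conjI) (auto simp: inner_diff_left)
  qed simp
  then show ?thesis
    unfolding phi_def by simp
qed

lemma lipschitz_gradient_const_nonneg:
  fixes f :: "'a::euclidean_space \<Rightarrow> real"
  assumes n: "is_norm n" and f_convex: "convex_on UNIV f"
    and f_deriv: "\<And>a. (f has_derivative (\<lambda>d. gf a \<bullet> d)) (at a)"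
    and gf_lipschitz: "\<And>a b. dual_norm n (gf a - gf b) \<le> L * n (a - b)"
  shows "0 \<le> L"
proof -
  obtain b :: 'a where "b \<in> Basis"
    using nonempty_Basis by blast
  then have "0 < n b"
    by (intro is_norm_pos[OF n]) auto
  have "f 0 + gf 0 \<bullet> b \<le> f b"
    using convex_on_gradient_ineq[OF f_convex f_deriv, of 0 b] by simp
  moreover have "f b \<le> f 0 + gf 0 \<bullet> b + L / 2 * (n b)\<^sup>2"
    using lipschitz_gradient_descent_ineq[OF n f_deriv gf_lipschitz, of 0 b] by simp
  ultimately have "0 \<le> L * (n b)\<^sup>2"
    by simp
  then show ?thesis
    using \<open>0 < n b\<close> by (simp add: zero_le_mult_iff)
qed

lemma fenchel_young_ineq:
  assumes "y \<in> conj_dom f"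
  shows "y \<bullet> u - f u \<le> conj_fun f y"
  using assms unfolding conj_dom_def conj_fun_def by (intro cSUP_upper) auto

lemma conj_fun_gradient:
  fixes f :: "'a::real_inner \<Rightarrow> real"
  assumes f_convex: "convex_on UNIV f" and f_deriv: "\<And>a. (f has_derivative (\<lambda>d. gf a \<bullet> d)) (at a)"
  shows "gf a \<in> conj_dom f" "conj_fun f (gf a) = gf a \<bullet> a - f a"
proof -
  have le: "gf a \<bullet> u - f u \<le> gf a \<bullet> a - f a" for u
    using convex_on_gradient_ineq[OF f_convex f_deriv, of a u] by (simp add: inner_diff_right)
  then show "gf a \<in> conj_dom f"
    unfolding conj_dom_def by (auto intro!: bdd_aboveI)
  show "conj_fun f (gf a) = gf a \<bullet> a - f a"
    unfolding conj_fun_def by (rule cSup_eq_maximum) (use le in auto)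
qed

text \<open>A subgradient g of the conjugate at y maximises u \<mapsto> y \<bullet> u - f u, so by
  differentiability y is the gradient of f at g.\<close>

lemma subgrad_conj_fun:
  fixes f :: "'a::real_inner \<Rightarrow> real"
  assumes f_convex: "convex_on UNIV f" and f_deriv: "\<And>a. (f has_derivative (\<lambda>d. gf a \<bullet> d)) (at a)"
    and y: "y \<in> conj_dom f" and g: "is_subgrad (conj_dom f) (conj_fun f) y g"
  shows "conj_fun f y = y \<bullet> g - f g" "gf g = y"
proof -
  have "conj_fun f y + g \<bullet> (gf g - y) \<le> conj_fun f (gf g)"
    using g conj_fun_gradient(1)[OF f_convex f_deriv, of g] unfolding is_subgrad_def by blast
  then have "conj_fun f y \<le> y \<bullet> g - f g"
    using conj_fun_gradient(2)[OF f_convex f_deriv, of g] by (simp add: inner_diff_right inner_commute)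
  with fenchel_young_ineq[OF y, of g]
  show conj: "conj_fun f y = y \<bullet> g - f g" by simp
  have "f g - y \<bullet> g \<le> f u - y \<bullet> u" for u
    using fenchel_young_ineq[OF y, of u] conj by simp
  moreover have "((\<lambda>u. f u - y \<bullet> u) has_derivative (\<lambda>h. gf g \<bullet> h - y \<bullet> h)) (at g)"
    using f_deriv by (auto intro!: derivative_eq_intros)
  ultimately have "(\<lambda>h. gf g \<bullet> h - y \<bullet> h) = (\<lambda>h. 0)"
    by (intro has_derivative_local_min[where f = "\<lambda>u. f u - y \<bullet> u"]) auto
  then have "(gf g - y) \<bullet> (gf g - y) = 0"
    by (metis inner_diff_left)
  then show "gf g = y" by simp
qed

lemma bregman_conj_fun_ge:
  fixes f :: "'a::euclidean_space \<Rightarrow> real"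
  assumes n: "is_norm n" and f_convex: "convex_on UNIV f"
    and f_deriv: "\<And>a. (f has_derivative (\<lambda>d. gf a \<bullet> d)) (at a)"
    and gf_lipschitz: "\<And>a b. dual_norm n (gf a - gf b) \<le> L * n (a - b)"
    and y: "y \<in> conj_dom f" and y': "y' \<in> conj_dom f" and g: "is_subgrad (conj_dom f) (conj_fun f) y g"
  shows "(y' - y) \<bullet> e - L / 2 * (n e)\<^sup>2 \<le> bregman (conj_fun f) g y y'"
  using fenchel_young_ineq[OF y', of "g + e"] lipschitz_gradient_descent_ineq[OF n f_deriv gf_lipschitz, of g e]
    subgrad_conj_fun[OF f_convex f_deriv y g]
  unfolding bregman_def by (simp add: inner_simps inner_commute algebra_simps)

lemma bregman_ge_half_sq:
  assumes nu: "strongly_convex_wrt S n 1 nu" and "a \<in> S" "b \<in> S" and ga: "is_subgrad S nu a ga"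
  shows "1 / 2 * (n (b - a))\<^sup>2 \<le> bregman nu ga a b"
proof -
  define B where "B = bregman nu ga a b"
  define Q where "Q = (n (b - a))\<^sup>2"
  have B_ge: "(1 - \<theta>) * Q / 2 \<le> B" if "0 < \<theta>" "\<theta> \<le> 1" for \<theta>
  proof -
    have "\<theta> *\<^sub>R b + (1 - \<theta>) *\<^sub>R a \<in> S"
      using nu \<open>a \<in> S\<close> \<open>b \<in> S\<close> that unfolding strongly_convex_wrt_def convex_def by auto
    then have "nu a + \<theta> * (ga \<bullet> (b - a)) \<le> nu (\<theta> *\<^sub>R b + (1 - \<theta>) *\<^sub>R a)"
      using ga unfolding is_subgrad_def by (force simp: algebra_simps)
    also have "\<dots> \<le> \<theta> * nu b + (1 - \<theta>) * nu a - 1 / 2 * \<theta> * (1 - \<theta>) * Q"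
      using nu \<open>a \<in> S\<close> \<open>b \<in> S\<close> that unfolding strongly_convex_wrt_def Q_def by auto
    finally have "\<theta> * (ga \<bullet> (b - a)) \<le> \<theta> * (nu b - nu a - (1 - \<theta>) * Q / 2)"
      by (simp add: algebra_simps)
    then show ?thesis
      using that unfolding B_def bregman_def by simp
  qed
  show ?thesis
  proof (rule ccontr)
    assume "\<not> ?thesis"
    then have "B < Q / 2"
      unfolding B_def Q_def by simp
    moreover have "0 \<le> B"
      using B_ge[of 1] by simp
    ultimately have "0 < Q" by simp
    define \<theta> where "\<theta> = (Q / 2 - B) / Q"
    have "(1 - \<theta>) * Q / 2 = (Q / 2 + B) / 2"
      using \<open>0 < Q\<close> unfolding \<theta>_def by (simp add: field_simps)
    moreover have "0 < \<theta>" "\<theta> \<le> 1"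
      using \<open>B < Q / 2\<close> \<open>0 < Q\<close> \<open>0 \<le> B\<close> unfolding \<theta>_def by (auto simp: field_simps)
    ultimately show False
      using B_ge[of \<theta>] \<open>B < Q / 2\<close> by simp
  qed
qed

section \<open>Bregman proximal steps\<close>

lemma bregman_prox_step_subgrad:
  fixes F :: "'a::real_inner \<Rightarrow> real"
  assumes yk: "is_arg_min (\<lambda>u. - (xt \<bullet> u) + F u + tau * bregman F gp yp u) (\<lambda>u. u \<in> D) yk"
    and tau: "0 \<le> tau" and gk: "(1 + tau) *\<^sub>R gk = xt + tau *\<^sub>R gp"
  shows "is_subgrad D F yk gk"
  unfolding is_subgrad_def
proof
  fix u assume "u \<in> D"
  then have "- (xt \<bullet> yk) + F yk + tau * bregman F gp yp yk \<le> - (xt \<bullet> u) + F u + tau * bregman F gp yp u"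
    using yk unfolding is_arg_min_def by (meson not_le)
  moreover have "(1 + tau) * (gk \<bullet> (u - yk)) = (xt + tau *\<^sub>R gp) \<bullet> (u - yk)"
    by (metis gk inner_scaleR_left)
  ultimately have "(1 + tau) * (gk \<bullet> (u - yk)) \<le> (1 + tau) * (F u - F yk)"
    unfolding bregman_def by (simp add: inner_simps algebra_simps)
  then show "F yk + gk \<bullet> (u - yk) \<le> F u"
    using tau by simp
qed

lemma bregman_prox_three_point:
  fixes F :: "'a::real_inner \<Rightarrow> real"
  assumes gk: "(1 + tau) *\<^sub>R gk = xt + tau *\<^sub>R gp"
  shows "F u - F yk = - (xt \<bullet> (yk - u)) + tau * bregman F gp yp yk + (tau + 1) * bregman F gk yk u
    - tau * bregman F gp yp u"
proof -
  have "(tau + 1) * (gk \<bullet> (u - yk)) = (xt + tau *\<^sub>R gp) \<bullet> (u - yk)"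
    by (metis gk add.commute inner_scaleR_left)
  then show ?thesis
    unfolding bregman_def by (simp add: inner_simps algebra_simps)
qed

text \<open>Take s = bp / c; in the degenerate case c = 0 the step condition forces L = 0,
  and then the minorant bounds W only if t \<le> 0.\<close>

lemma mult_le_of_quadratic_minorant:
  fixes L c bp p t m W :: real
  assumes "0 \<le> c" "0 < bp" "0 < p" "0 \<le> L" and step: "2 * L * bp \<le> p * c"
    and W: "\<And>s. s * t - L / 2 * s\<^sup>2 * m\<^sup>2 \<le> W"
  shows "bp * t \<le> bp * p / 4 * m\<^sup>2 + c * W"
proof (cases "c = 0")
  case True
  then have "L = 0"
    using step \<open>0 < bp\<close> \<open>0 \<le> L\<close> by (simp add: mult_le_0_iff)
  have "t \<le> 0"
  proof (rule ccontr)
    assume "\<not> t \<le> 0"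
    then show False
      using W[of "(\<bar>W\<bar> + 1) / t"] \<open>L = 0\<close> by simp
  qed
  then have "bp * t \<le> 0"
    using \<open>0 < bp\<close> by (simp add: mult_nonneg_nonpos)
  moreover have "0 \<le> bp * p / 4 * m\<^sup>2"
    using \<open>0 < bp\<close> \<open>0 < p\<close> by simp
  ultimately show ?thesis
    using True by simp
next
  case False
  then have "0 < c"
    using \<open>0 \<le> c\<close> by simp
  have "c * ((bp / c) * t - L / 2 * (bp / c)\<^sup>2 * m\<^sup>2) \<le> c * W"
    using \<open>0 < c\<close> by (intro mult_left_mono[OF W]) simp
  moreover have "c * ((bp / c) * t - L / 2 * (bp / c)\<^sup>2 * m\<^sup>2) = bp * t - (L * bp) * bp / (2 * c) * m\<^sup>2"
    using \<open>0 < c\<close> by (simp add: field_simps power2_eq_square)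
  moreover have "(L * bp) * bp / (2 * c) \<le> bp * p / 4"
    using step \<open>0 < bp\<close> \<open>0 < c\<close> by (simp add: field_simps)
  then have "(L * bp) * bp / (2 * c) * m\<^sup>2 \<le> bp * p / 4 * m\<^sup>2"
    by (rule mult_right_mono) simp
  ultimately show ?thesis
    by linarith
qed

section \<open>One sample path of the iteration\<close>

text \<open>Only feasibility of the inner
  iterates enters the estimate, so neither the primal subproblems nor the z-iterates appear.
  For k = 1 the truncated subtraction gives x (k - 2) = x 0, matching the convention
  x_{-1} = x_0 of the algorithm.\<close>

locale pds_spp_trajectory =
  fixes nrm :: "'a::euclidean_space \<Rightarrow> real" and Xs :: "'a set"
    and nu :: "'a \<Rightarrow> real" and nu' :: "'a \<Rightarrow> 'a"
    and f :: "'a \<Rightarrow> real" and gf :: "'a \<Rightarrow> 'a" and Lt :: real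
    and T :: "nat \<Rightarrow> nat" and beta p lam tau :: "nat \<Rightarrow> real" and N :: nat
    and x xh y g v :: "nat \<Rightarrow> 'a" and xin :: "nat \<Rightarrow> nat \<Rightarrow> 'a"
  assumes norm: "is_norm nrm"
    and nu_strongly_convex: "strongly_convex_wrt Xs nrm 1 nu"
    and nu_subgrad: "\<And>a. a \<in> Xs \<Longrightarrow> is_subgrad Xs nu a (nu' a)"
    and f_convex: "convex_on UNIV f"
    and f_deriv: "\<And>a. (f has_derivative (\<lambda>d. gf a \<bullet> d)) (at a)"
    and gf_lipschitz: "\<And>a b. dual_norm nrm (gf a - gf b) \<le> Lt * nrm (a - b)"
    and T_pos: "\<And>k. 0 < T k" and beta_pos: "\<And>k. 0 < beta k" and p_pos: "\<And>k. 0 < p k"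
    and tau_nonneg: "\<And>k. 0 \<le> tau k" and tau_1: "tau 1 = 0"
    and beta_tau: "\<And>k. 2 \<le> k \<Longrightarrow> beta k * tau k \<le> beta (k - 1) * (tau (k - 1) + 1)"
    and beta_lam: "\<And>k. 2 \<le> k \<Longrightarrow> beta (k - 1) = beta k * lam k"
    and lam_tau: "\<And>k. 2 \<le> k \<Longrightarrow> 2 * Lt * lam k \<le> p (k - 1) * tau k"
    and x_0: "x 0 \<in> Xs" and xh_0: "xh 0 = x 0"
    and y_0: "y 0 \<in> conj_dom f" and g_0: "is_subgrad (conj_dom f) (conj_fun f) (y 0) (g 0)"
    and dual_step: "\<And>k. k \<in> {1..N} \<Longrightarrow> is_arg_min
        (\<lambda>u. - ((x (k - 1) + lam k *\<^sub>R (xh (k - 1) - x (k - 2))) \<bullet> u) + conj_fun f u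
          + tau k * bregman (conj_fun f) (g (k - 1)) (y (k - 1)) u)
        (\<lambda>u. u \<in> conj_dom f) (y k)"
    and g_step: "\<And>k. k \<in> {1..N} \<Longrightarrow>
        g k = (1 / (1 + tau k)) *\<^sub>R (x (k - 1) + lam k *\<^sub>R (xh (k - 1) - x (k - 2)) + tau k *\<^sub>R g (k - 1))"
    and inner_feasible: "\<And>k t. k \<in> {1..N} \<Longrightarrow> t \<in> {1..T k} \<Longrightarrow> xin k t \<in> Xs"
    and outer_step: "\<And>k. k \<in> {1..N} \<Longrightarrow>
        x k = xin k (T k) \<and> xh k = (1 / real (T k)) *\<^sub>R (\<Sum>t=1..T k. xin k t)"
begin

abbreviation xt :: "nat \<Rightarrow> 'a" where
  "xt k \<equiv> x (k - 1) + lam k *\<^sub>R (xh (k - 1) - x (k - 2))"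

abbreviation W :: "nat \<Rightarrow> 'a \<Rightarrow> real" where
  "W j u \<equiv> bregman (conj_fun f) (g j) (y j) u"

definition prox_term :: "nat \<Rightarrow> real" where
  "prox_term k = p k / real (T k) * (\<Sum>t=1..T k. bregman nu (nu' (x (k - 1))) (x (k - 1)) (xin k t))"

definition gap_term :: "'a \<Rightarrow> 'a \<Rightarrow> nat \<Rightarrow> real" where
  "gap_term xx yy k = - (xh k \<bullet> yy) + xx \<bullet> y k + v k \<bullet> (xh k - xx) - conj_fun f (y k) + conj_fun f yy
     + prox_term k"

definition potential :: "'a \<Rightarrow> nat \<Rightarrow> real" where
  "potential yy k = (if k = 0 then 0 else - beta k * ((x (k - 1) - xh k) \<bullet> (y k - yy))
     + beta k * p k / 4 * (nrm (x (k - 1) - xh k))\<^sup>2 + beta k * (tau k + 1) * W k yy)"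

definition noise :: "'a \<Rightarrow> nat \<Rightarrow> real" where
  "noise xx k = beta k * ((v k - y k) \<bullet> (x (k - 1) - xx)) - beta k / p k * (dual_norm nrm (v k - y k))\<^sup>2"

lemma g_step_scaled: "k \<in> {1..N} \<Longrightarrow> (1 + tau k) *\<^sub>R g k = xt k + tau k *\<^sub>R g (k - 1)"
  using g_step[of k] tau_nonneg[of k] by simp

lemma dual_feasible:
  assumes "k \<le> N"
  shows "y k \<in> conj_dom f" "is_subgrad (conj_dom f) (conj_fun f) (y k) (g k)"
proof (atomize (full), cases "k = 0")
  case False
  then have k: "k \<in> {1..N}"
    using assms by simp
  then show "y k \<in> conj_dom f \<and> is_subgrad (conj_dom f) (conj_fun f) (y k) (g k)"
    using dual_step[OF k] bregman_prox_step_subgrad[OF dual_step[OF k] tau_nonneg g_step_scaled[OF k]]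
    unfolding is_arg_min_def by blast
qed (use y_0 g_0 in simp)

lemma x_prev_feasible:
  assumes k: "k \<in> {1..N}"
  shows "x (k - 1) \<in> Xs"
proof (cases "k = 1")
  case False
  then have "k - 1 \<in> {1..N}"
    using k by auto
  moreover have "T (k - 1) \<in> {1..T (k - 1)}"
    using T_pos[of "k - 1"] by simp
  ultimately show ?thesis
    using outer_step inner_feasible by simp
qed (use x_0 in simp)

lemma prox_term_ge:
  assumes k: "k \<in> {1..N}"
  shows "p k / 2 * (nrm (x (k - 1) - xh k))\<^sup>2 \<le> prox_term k"
proof -
  let ?V = "\<lambda>t. bregman nu (nu' (x (k - 1))) (x (k - 1)) (xin k t)"
  have "(nrm (xh k - x (k - 1)))\<^sup>2 \<le> 1 / real (T k) * (\<Sum>t=1..T k. (nrm (xin k t - x (k - 1)))\<^sup>2)"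
    using is_norm_average_sq_le[OF norm T_pos[of k], of "xin k" "x (k - 1)"] outer_step[OF k] by simp
  then have "(nrm (x (k - 1) - xh k))\<^sup>2 \<le> 1 / real (T k) * (\<Sum>t=1..T k. (nrm (xin k t - x (k - 1)))\<^sup>2)"
    using is_norm_minus_commute[OF norm, of "x (k - 1)" "xh k"] by simp
  also have "\<dots> \<le> 1 / real (T k) * (\<Sum>t=1..T k. 2 * ?V t)"
    using bregman_ge_half_sq[OF nu_strongly_convex x_prev_feasible[OF k] inner_feasible[OF k]
        nu_subgrad[OF x_prev_feasible[OF k]]]
    by (intro mult_left_mono sum_mono) fastforce+
  finally have "(nrm (x (k - 1) - xh k))\<^sup>2 \<le> 2 / real (T k) * (\<Sum>t=1..T k. ?V t)"
    by (simp add: sum_distrib_left[symmetric])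
  from mult_left_mono[OF this, of "p k / 2"] show ?thesis
    using p_pos[of k] unfolding prox_term_def by simp
qed

lemma extrapolation_le:
  assumes k: "k \<in> {2..N}"
  shows "beta (k - 1) * ((y k - y (k - 1)) \<bullet> (xh (k - 1) - x (k - 2)))
    \<le> beta (k - 1) * p (k - 1) / 4 * (nrm (x (k - 2) - xh (k - 1)))\<^sup>2 + beta k * tau k * W (k - 1) (y k)"
proof -
  let ?a = "xh (k - 1) - x (k - 2)"
  have "k - 1 \<le> N" "k \<le> N"
    using k by auto
  then have "(y k - y (k - 1)) \<bullet> (s *\<^sub>R ?a) - Lt / 2 * (nrm (s *\<^sub>R ?a))\<^sup>2 \<le> W (k - 1) (y k)" for s
    by (intro bregman_conj_fun_ge[OF norm f_convex f_deriv gf_lipschitz] dual_feasible)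
  then have "s * ((y k - y (k - 1)) \<bullet> ?a) - Lt / 2 * s\<^sup>2 * (nrm ?a)\<^sup>2 \<le> W (k - 1) (y k)" for s
    by (simp add: is_norm_scaleR[OF norm] power_mult_distrib mult.assoc)
  moreover have "2 * Lt * beta (k - 1) \<le> p (k - 1) * (beta k * tau k)"
    using mult_left_mono[OF lam_tau, of k "beta k"] beta_lam[of k] beta_pos[of k] k
    by (simp add: algebra_simps)
  ultimately have "beta (k - 1) * ((y k - y (k - 1)) \<bullet> ?a)
      \<le> beta (k - 1) * p (k - 1) / 4 * (nrm ?a)\<^sup>2 + beta k * tau k * W (k - 1) (y k)"
    using beta_pos[of k] tau_nonneg[of k] beta_pos[of "k - 1"] p_pos[of "k - 1"]
      lipschitz_gradient_const_nonneg[OF norm f_convex f_deriv gf_lipschitz]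
    by (intro mult_le_of_quadratic_minorant) auto
  then show ?thesis
    using is_norm_minus_commute[OF norm, of "x (k - 2)" "xh (k - 1)"] by simp
qed

lemma gap_term_eq:
  assumes k: "k \<in> {1..N}"
  shows "gap_term xx yy k = - ((x (k - 1) - xh k) \<bullet> (y k - yy))
      - lam k * ((xh (k - 1) - x (k - 2)) \<bullet> (y k - yy))
      + tau k * W (k - 1) (y k) + (tau k + 1) * W k yy - tau k * W (k - 1) yy
      - (v k - y k) \<bullet> (x (k - 1) - xh k) + (v k - y k) \<bullet> (x (k - 1) - xx) + prox_term k"
  using bregman_prox_three_point[OF g_step_scaled[OF k], of "conj_fun f" yy "y k" "y (k - 1)"]
  unfolding gap_term_def by (simp add: inner_simps inner_commute)

lemma potential_prev_ge:
  assumes k: "k \<in> {1..N}" and yy: "yy \<in> conj_dom f"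
  shows "beta k * (lam k * ((xh (k - 1) - x (k - 2)) \<bullet> (y k - yy)) - tau k * W (k - 1) (y k)
      + tau k * W (k - 1) yy) \<le> potential yy (k - 1)"
proof (cases "k = 1")
  case False
  then have k2: "k \<in> {2..N}"
    using k by auto
  let ?a = "xh (k - 1) - x (k - 2)"
  have "k - 1 \<le> N"
    using k by auto
  then have "0 \<le> W (k - 1) yy"
    using dual_feasible(2)[OF \<open>k - 1 \<le> N\<close>] yy unfolding is_subgrad_def bregman_def by auto
  then have Wp: "beta k * tau k * W (k - 1) yy \<le> beta (k - 1) * (tau (k - 1) + 1) * W (k - 1) yy"
    using beta_tau[of k] k2 by (intro mult_right_mono) auto
  have "?a \<bullet> (y k - yy) = (y k - y (k - 1)) \<bullet> ?a + ?a \<bullet> (y (k - 1) - yy)"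
    by (simp add: inner_diff_left inner_diff_right inner_commute)
  then have "beta (k - 1) * (?a \<bullet> (y k - yy))
      = beta (k - 1) * ((y k - y (k - 1)) \<bullet> ?a) + beta (k - 1) * (?a \<bullet> (y (k - 1) - yy))"
    by (metis distrib_left)
  moreover have "beta k * (lam k * (?a \<bullet> (y k - yy)) - tau k * W (k - 1) (y k) + tau k * W (k - 1) yy)
      = beta (k - 1) * (?a \<bullet> (y k - yy)) - beta k * tau k * W (k - 1) (y k) + beta k * tau k * W (k - 1) yy"
    using beta_lam[of k] k2 by (simp add: ring_distribs mult.assoc)
  moreover have "potential yy (k - 1) = beta (k - 1) * (?a \<bullet> (y (k - 1) - yy))
      + beta (k - 1) * p (k - 1) / 4 * (nrm (x (k - 2) - xh (k - 1)))\<^sup>2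
      + beta (k - 1) * (tau (k - 1) + 1) * W (k - 1) yy"
    using k2 unfolding potential_def by (simp add: inner_diff_left numeral_2_eq_2 algebra_simps)
  ultimately show ?thesis
    using extrapolation_le[OF k2] Wp by linarith
qed (use xh_0 tau_1 in \<open>simp add: potential_def\<close>)

lemma gap_term_ge:
  assumes k: "k \<in> {1..N}" and yy: "yy \<in> conj_dom f"
  shows "potential yy k - potential yy (k - 1) + noise xx k \<le> beta k * gap_term xx yy k"
proof -
  define D where "D = dual_norm nrm (v k - y k)"
  let ?e = "x (k - 1) - xh k"
  have "- (D\<^sup>2 / p k) - p k / 4 * (nrm ?e)\<^sup>2 \<le> - ((v k - y k) \<bullet> ?e)"
    using inner_ge_young[OF norm p_pos[of k], of "v k - y k" "xh k - x (k - 1)"]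
      is_norm_minus_commute[OF norm, of "x (k - 1)" "xh k"]
    unfolding D_def by (simp add: inner_diff_right)
  then have "p k / 4 * (nrm ?e)\<^sup>2 - D\<^sup>2 / p k - (?e \<bullet> (y k - yy))
      - lam k * ((xh (k - 1) - x (k - 2)) \<bullet> (y k - yy))
      + tau k * W (k - 1) (y k) + (tau k + 1) * W k yy - tau k * W (k - 1) yy
      + (v k - y k) \<bullet> (x (k - 1) - xx) \<le> gap_term xx yy k"
    using gap_term_eq[OF k, of xx yy] prox_term_ge[OF k] by linarith
  from mult_left_mono[OF this less_imp_le[OF beta_pos]]
  have "potential yy k + noise xx k - beta k * (lam k * ((xh (k - 1) - x (k - 2)) \<bullet> (y k - yy))
      - tau k * W (k - 1) (y k) + tau k * W (k - 1) yy) \<le> beta k * gap_term xx yy k"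
    using k unfolding potential_def noise_def D_def by (simp add: algebra_simps)
  then show ?thesis
    using potential_prev_ge[OF k yy] by linarith
qed

lemma gap_sum_ge:
  assumes "yy \<in> conj_dom f"
  shows "potential yy N + (\<Sum>k=1..N. noise xx k) \<le> (\<Sum>k=1..N. beta k * gap_term xx yy k)"
proof -
  have "(\<Sum>k=1..N. potential yy k - potential yy (k - 1)) + (\<Sum>k=1..N. noise xx k)
      \<le> (\<Sum>k=1..N. beta k * gap_term xx yy k)"
    unfolding sum.distrib[symmetric] by (intro sum_mono gap_term_ge assms) auto
  moreover have "(\<Sum>k=1..N. potential yy k - potential yy (k - 1)) = potential yy N"
    using sum_telescope''[of 0 N "potential yy"] by (simp add: potential_def)
  ultimately show ?thesis
    by simp
qed

end

section \<open>Expectations of the noise terms\<close>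

lemma integrable_mult_inner_Basis:
  fixes u w :: "'w \<Rightarrow> 'a::euclidean_space"
  assumes "u \<in> borel_measurable M" "w \<in> borel_measurable M"
    and "integrable M (\<lambda>\<omega>. (norm (u \<omega>))\<^sup>2)" "integrable M (\<lambda>\<omega>. (norm (w \<omega>))\<^sup>2)" and "b \<in> Basis"
  shows "integrable M (\<lambda>\<omega>. (u \<omega> \<bullet> b) * (w \<omega> \<bullet> b))"
proof (rule Bochner_Integration.integrable_bound[OF Bochner_Integration.integrable_add[OF assms(3,4)]])
  show "(\<lambda>\<omega>. (u \<omega> \<bullet> b) * (w \<omega> \<bullet> b)) \<in> borel_measurable M"
    using assms(1,2) by measurable
  have "\<bar>u \<omega> \<bullet> b\<bar> * \<bar>w \<omega> \<bullet> b\<bar> \<le> (norm (u \<omega>))\<^sup>2 + (norm (w \<omega>))\<^sup>2" for \<omega>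
  proof -
    have "\<bar>u \<omega> \<bullet> b\<bar> * \<bar>w \<omega> \<bullet> b\<bar> \<le> norm (u \<omega>) * norm (w \<omega>)"
      using Basis_le_norm[OF assms(5)] by (intro mult_mono) auto
    moreover have "2 * (norm (u \<omega>) * norm (w \<omega>)) \<le> (norm (u \<omega>))\<^sup>2 + (norm (w \<omega>))\<^sup>2"
      using sum_squares_bound[of "norm (u \<omega>)" "norm (w \<omega>)"] by (simp add: mult.assoc)
    moreover have "0 \<le> norm (u \<omega>) * norm (w \<omega>)"
      by simp
    ultimately show ?thesis
      by linarith
  qed
  then show "AE \<omega> in M. norm ((u \<omega> \<bullet> b) * (w \<omega> \<bullet> b)) \<le> norm ((norm (u \<omega>))\<^sup>2 + (norm (w \<omega>))\<^sup>2)"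
    by (simp add: abs_mult)
qed

lemma (in finite_measure) integrable_norm_sq_diff_const:
  fixes u :: "'a \<Rightarrow> 'b::euclidean_space"
  assumes "u \<in> borel_measurable M" "integrable M (\<lambda>\<omega>. (norm (u \<omega>))\<^sup>2)"
  shows "integrable M (\<lambda>\<omega>. (norm (u \<omega> - c))\<^sup>2)"
proof (rule Bochner_Integration.integrable_bound)
  show "integrable M (\<lambda>\<omega>. 2 * (norm (u \<omega>))\<^sup>2 + 2 * (norm c)\<^sup>2)"
    using assms(2) by simp
  show "(\<lambda>\<omega>. (norm (u \<omega> - c))\<^sup>2) \<in> borel_measurable M"
    using assms(1) by measurable
  have "(norm (u \<omega> - c))\<^sup>2 \<le> 2 * (norm (u \<omega>))\<^sup>2 + 2 * (norm c)\<^sup>2" for \<omega>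
  proof -
    have "(norm (u \<omega> - c))\<^sup>2 \<le> (norm (u \<omega>) + norm c)\<^sup>2"
      using norm_triangle_ineq4 by (intro power_mono) auto
    then show ?thesis
      using sum_squares_bound[of "norm (u \<omega>)" "norm c"] by (simp add: power2_sum)
  qed
  then show "AE \<omega> in M. norm ((norm (u \<omega> - c))\<^sup>2) \<le> norm (2 * (norm (u \<omega>))\<^sup>2 + 2 * (norm c)\<^sup>2)"
    by simp
qed

context prob_space
begin

lemma finite_measure_subalgebra_of_subalgebra: "subalgebra M F \<Longrightarrow> finite_measure_subalgebra M F"
  by (simp add: finite_measure_subalgebra_def finite_measure_subalgebra_axioms_def finite_measure_axioms)

text \<open>Coordinatewise, E[(u \<bullet> b) (v \<bullet> b)] = E[(u \<bullet> b) E[v \<bullet> b | F]] because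
  u \<bullet> b is F-measurable.\<close>

lemma integral_inner_eq_0_of_cond_unbiased:
  fixes u v y :: "'a \<Rightarrow> 'b::euclidean_space"
  assumes F: "subalgebra M F"
    and u: "u \<in> borel_measurable F" "integrable M (\<lambda>\<omega>. (norm (u \<omega>))\<^sup>2)"
    and v: "v \<in> borel_measurable M" "integrable M (\<lambda>\<omega>. (norm (v \<omega>))\<^sup>2)"
    and y: "y \<in> borel_measurable M" "integrable M (\<lambda>\<omega>. (norm (y \<omega>))\<^sup>2)"
    and unbiased: "\<And>b. b \<in> Basis \<Longrightarrow> AE \<omega> in M. real_cond_exp M F (\<lambda>\<omega>. v \<omega> \<bullet> b) \<omega> = y \<omega> \<bullet> b"
  shows "integrable M (\<lambda>\<omega>. (v \<omega> - y \<omega>) \<bullet> u \<omega>)" "(\<integral>\<omega>. (v \<omega> - y \<omega>) \<bullet> u \<omega> \<partial>M) = 0"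
proof -
  interpret finite_measure_subalgebra M F
    using F by (rule finite_measure_subalgebra_of_subalgebra)
  have uM: "u \<in> borel_measurable M"
    by (rule measurable_from_subalg[OF subalg u(1)])
  have int_v: "integrable M (\<lambda>\<omega>. (u \<omega> \<bullet> b) * (v \<omega> \<bullet> b))"
    and int_y: "integrable M (\<lambda>\<omega>. (u \<omega> \<bullet> b) * (y \<omega> \<bullet> b))" if "b \<in> Basis" for b
    using integrable_mult_inner_Basis[OF uM _ u(2) _ that] v y by auto
  have "(\<integral>\<omega>. (u \<omega> \<bullet> b) * (v \<omega> \<bullet> b) \<partial>M) = (\<integral>\<omega>. (u \<omega> \<bullet> b) * (y \<omega> \<bullet> b) \<partial>M)"
    if b: "b \<in> Basis" for b
  proof -
    have "(\<lambda>\<omega>. u \<omega> \<bullet> b) \<in> borel_measurable F" "(\<lambda>\<omega>. v \<omega> \<bullet> b) \<in> borel_measurable M"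
      using u(1) v(1) by measurable
    from real_cond_exp_intg(2)[OF int_v[OF b] this]
    have "(\<integral>\<omega>. (u \<omega> \<bullet> b) * (v \<omega> \<bullet> b) \<partial>M)
        = (\<integral>\<omega>. (u \<omega> \<bullet> b) * real_cond_exp M F (\<lambda>\<omega>. v \<omega> \<bullet> b) \<omega> \<partial>M)" ..
    also have "\<dots> = (\<integral>\<omega>. (u \<omega> \<bullet> b) * (y \<omega> \<bullet> b) \<partial>M)"
      using unbiased[OF b] uM y(1) by (intro integral_cong_AE) auto
    finally show ?thesis .
  qed
  moreover have "(v \<omega> - y \<omega>) \<bullet> u \<omega> = (\<Sum>b\<in>Basis. (u \<omega> \<bullet> b) * (v \<omega> \<bullet> b) - (u \<omega> \<bullet> b) * (y \<omega> \<bullet> b))" for \<omega>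
    unfolding euclidean_inner[of "v \<omega> - y \<omega>" "u \<omega>"] by (simp add: inner_diff_left algebra_simps sum_subtractf)
  ultimately show "integrable M (\<lambda>\<omega>. (v \<omega> - y \<omega>) \<bullet> u \<omega>)" "(\<integral>\<omega>. (v \<omega> - y \<omega>) \<bullet> u \<omega> \<partial>M) = 0"
    using int_v int_y by (simp_all add: integral_sum)
qed

lemma integral_le_of_real_cond_exp_le:
  assumes "subalgebra M F" "integrable M X" "AE \<omega> in M. real_cond_exp M F X \<omega> \<le> c"
  shows "(\<integral>\<omega>. X \<omega> \<partial>M) \<le> c"
proof -
  interpret finite_measure_subalgebra M F
    using assms(1) by (rule finite_measure_subalgebra_of_subalgebra)
  have "(\<integral>\<omega>. X \<omega> \<partial>M) = (\<integral>\<omega>. real_cond_exp M F X \<omega> \<partial>M)"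
    using real_cond_exp_int(2)[OF assms(2)] by simp
  also have "\<dots> \<le> c"
    by (rule integral_le_const[OF real_cond_exp_int(1)[OF assms(2)] assms(3)])
  finally show ?thesis .
qed

lemma integral_mono_add_noise:
  fixes f g e :: "'a \<Rightarrow> real"
  assumes "integrable M f" "integrable M g" "integrable M e"
    and "\<And>\<omega>. \<omega> \<in> space M \<Longrightarrow> g \<omega> + c + e \<omega> \<le> f \<omega>" and "- c \<le> (\<integral>\<omega>. e \<omega> \<partial>M)"
  shows "(\<integral>\<omega>. g \<omega> \<partial>M) \<le> (\<integral>\<omega>. f \<omega> \<partial>M)"
proof -
  have "(\<integral>\<omega>. g \<omega> + c + e \<omega> \<partial>M) \<le> (\<integral>\<omega>. f \<omega> \<partial>M)"
    using assms(1-4) by (intro integral_mono Bochner_Integration.integrable_add integrable_const) auto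
  moreover have "(\<integral>\<omega>. g \<omega> + c + e \<omega> \<partial>M) = (\<integral>\<omega>. g \<omega> \<partial>M) + c + (\<integral>\<omega>. e \<omega> \<partial>M)"
    using assms(2,3) by (simp add: prob_space)
  ultimately show ?thesis
    using assms(5) by linarith
qed

lemma expected_noise_ge:
  fixes u v y :: "nat \<Rightarrow> 'a \<Rightarrow> 'b::euclidean_space" and sigma :: "nat \<Rightarrow> real"
  assumes F: "\<And>k. k \<in> K \<Longrightarrow> subalgebra M (F k)"
    and u: "\<And>k. k \<in> K \<Longrightarrow> u k \<in> borel_measurable (F k) \<and> integrable M (\<lambda>\<omega>. (norm (u k \<omega>))\<^sup>2)"
    and v: "\<And>k. k \<in> K \<Longrightarrow> v k \<in> borel_measurable M \<and> integrable M (\<lambda>\<omega>. (norm (v k \<omega>))\<^sup>2)"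
    and y: "\<And>k. k \<in> K \<Longrightarrow> y k \<in> borel_measurable M \<and> integrable M (\<lambda>\<omega>. (norm (y k \<omega>))\<^sup>2)"
    and unbiased: "\<And>k b. k \<in> K \<Longrightarrow> b \<in> Basis \<Longrightarrow>
      AE \<omega> in M. real_cond_exp M (F k) (\<lambda>\<omega>. v k \<omega> \<bullet> b) \<omega> = y k \<omega> \<bullet> b"
    and var: "\<And>k. k \<in> K \<Longrightarrow> integrable M (\<lambda>\<omega>. (dual_norm n (v k \<omega> - y k \<omega>))\<^sup>2)"
      "\<And>k. k \<in> K \<Longrightarrow> AE \<omega> in M. real_cond_exp M (F k) (\<lambda>\<omega>. (dual_norm n (v k \<omega> - y k \<omega>))\<^sup>2) \<omega> \<le> (sigma k)\<^sup>2"
    and beta: "\<And>k. k \<in> K \<Longrightarrow> 0 \<le> beta k" and p: "\<And>k. k \<in> K \<Longrightarrow> 0 < p k"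
  shows "integrable M (\<lambda>\<omega>. \<Sum>k\<in>K. beta k * ((v k \<omega> - y k \<omega>) \<bullet> u k \<omega>)
      - beta k / p k * (dual_norm n (v k \<omega> - y k \<omega>))\<^sup>2)"
    and "- (\<Sum>k\<in>K. beta k * (sigma k)\<^sup>2 / p k) \<le> (\<integral>\<omega>. (\<Sum>k\<in>K. beta k * ((v k \<omega> - y k \<omega>) \<bullet> u k \<omega>)
      - beta k / p k * (dual_norm n (v k \<omega> - y k \<omega>))\<^sup>2) \<partial>M)"
proof -
  have mean_0: "integrable M (\<lambda>\<omega>. (v k \<omega> - y k \<omega>) \<bullet> u k \<omega>) \<and> (\<integral>\<omega>. (v k \<omega> - y k \<omega>) \<bullet> u k \<omega> \<partial>M) = 0"
    if "k \<in> K" for k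
    using integral_inner_eq_0_of_cond_unbiased[OF F[OF that]] u[OF that] v[OF that] y[OF that]
      unbiased[OF that] by blast
  show "integrable M (\<lambda>\<omega>. \<Sum>k\<in>K. beta k * ((v k \<omega> - y k \<omega>) \<bullet> u k \<omega>)
      - beta k / p k * (dual_norm n (v k \<omega> - y k \<omega>))\<^sup>2)"
    using mean_0 var(1) by auto
  have "- (beta k * (sigma k)\<^sup>2 / p k)
      \<le> (\<integral>\<omega>. beta k * ((v k \<omega> - y k \<omega>) \<bullet> u k \<omega>) - beta k / p k * (dual_norm n (v k \<omega> - y k \<omega>))\<^sup>2 \<partial>M)"
    if k: "k \<in> K" for k
  proof -
    have "(\<integral>\<omega>. (dual_norm n (v k \<omega> - y k \<omega>))\<^sup>2 \<partial>M) \<le> (sigma k)\<^sup>2"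
      by (rule integral_le_of_real_cond_exp_le[OF F[OF k] var(1)[OF k] var(2)[OF k]])
    then show ?thesis
      using mean_0[OF k] var(1)[OF k] beta[OF k] p[OF k] by (simp add: mult_left_mono divide_right_mono)
  qed
  then show "- (\<Sum>k\<in>K. beta k * (sigma k)\<^sup>2 / p k) \<le> (\<integral>\<omega>. (\<Sum>k\<in>K. beta k * ((v k \<omega> - y k \<omega>) \<bullet> u k \<omega>)
      - beta k / p k * (dual_norm n (v k \<omega> - y k \<omega>))\<^sup>2) \<partial>M)"
    using mean_0 var(1) by (simp add: integral_sum sum_negf[symmetric] sum_mono)
qed

end

theorem lemma5p3:
  fixes M :: "'w measure" and F :: "nat \<Rightarrow> 'w measure"
    and Xs :: "'a::euclidean_space set" and nrm :: "'a \<Rightarrow> real"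
    and Zs :: "'b::euclidean_space set" and nrmZ :: "'b \<Rightarrow> real"
    and Alin :: "'a \<Rightarrow> 'b" and h :: "'b \<Rightarrow> real" and mu :: real
    and nu :: "'a \<Rightarrow> real" and nu' :: "'a \<Rightarrow> 'a"
    and f :: "'a \<Rightarrow> real" and gf :: "'a \<Rightarrow> 'a" and Lt :: real
    and zeta :: "'b \<Rightarrow> real" and zeta' :: "'b \<Rightarrow> 'b"
    and x0 y0 g0 :: 'a and z0 :: 'b
    and T :: "nat \<Rightarrow> nat" and beta p lam tau sigma :: "nat \<Rightarrow> real"
    and q eta alpha :: "nat \<Rightarrow> nat \<Rightarrow> real" and N :: nat
    and x xh y g v :: "nat \<Rightarrow> 'w \<Rightarrow> 'a" and z :: "nat \<Rightarrow> 'w \<Rightarrow> 'b"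
    and xin :: "nat \<Rightarrow> nat \<Rightarrow> 'w \<Rightarrow> 'a" and zin :: "nat \<Rightarrow> nat \<Rightarrow> 'w \<Rightarrow> 'b"
    and xx yy :: 'a
  assumes \<comment> \<open>spaces, norms and functions\<close>
    "closed Xs" "convex Xs" "Xs \<noteq> {}" "is_norm nrm"
    "closed Zs" "convex Zs" "is_norm nrmZ"
    "linear Alin" "convex_on Zs h" "mu \<ge> 0"
    "strongly_convex_wrt Xs nrm 1 nu" "\<forall>a\<in>Xs. is_subgrad Xs nu a (nu' a)"
    "convex_on UNIV f" "\<forall>a. (f has_derivative (\<lambda>d. gf a \<bullet> d)) (at a)"
    "\<forall>a b. dual_norm nrm (gf a - gf b) \<le> Lt * nrm (a - b)"
    "strongly_convex_wrt Zs nrmZ 1 zeta" "\<forall>a\<in>Zs. is_subgrad Zs zeta a (zeta' a)"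
  and \<comment> \<open>parameters\<close>
    "\<forall>k. T k > 0" "\<forall>k. beta k > 0" "\<forall>k. p k > 0"
    "\<forall>k t. q k t > 0" "\<forall>k t. eta k t > 0"
    "\<forall>k. lam k \<ge> 0" "\<forall>k. tau k \<ge> 0" "\<forall>k t. alpha k t \<ge> 0"
    "N \<ge> 1"
    "tau 1 = 0"
    "\<forall>k\<ge>2. beta k * tau k \<le> beta (k - 1) * (tau (k - 1) + 1)"
    "\<forall>k\<ge>2. beta (k - 1) = beta k * lam k"
    "\<forall>k\<ge>2. 2 * Lt * lam k \<le> p (k - 1) * tau k"
  and \<comment> \<open>initialisation (deterministic); g k \<omega> plays the role of (f~*)'(y_k)\<close>
    "x0 \<in> Xs" "y0 \<in> conj_dom f" "z0 \<in> Zs"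
    "is_subgrad (conj_dom f) (conj_fun f) y0 g0"
    "\<forall>\<omega>\<in>space M. x 0 \<omega> = x0 \<and> xh 0 \<omega> = x0 \<and> y 0 \<omega> = y0 \<and> z 0 \<omega> = z0 \<and> g 0 \<omega> = g0"
  and \<comment> \<open>outer iteration: dual step\<close>
    "\<forall>k\<in>{1..N}. \<forall>\<omega>\<in>space M.
       (let xt = x (k - 1) \<omega> + lam k *\<^sub>R (xh (k - 1) \<omega> - (if k = 1 then x0 else x (k - 2) \<omega>)) in
        is_arg_min (\<lambda>u. - (xt \<bullet> u) + conj_fun f u
                         + tau k * bregman (conj_fun f) (g (k - 1) \<omega>) (y (k - 1) \<omega>) u)
                   (\<lambda>u. u \<in> conj_dom f) (y k \<omega>)
        \<and> g k \<omega> = (1 / (1 + tau k)) *\<^sub>R (xt + tau k *\<^sub>R g (k - 1) \<omega>))"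
  and \<comment> \<open>inner iterations\<close>
    "\<forall>k\<in>{1..N}. \<forall>\<omega>\<in>space M. xin k 0 \<omega> = x (k - 1) \<omega> \<and> zin k 0 \<omega> = z (k - 1) \<omega>"
    "\<forall>k\<in>{1..N}. \<forall>t\<in>{1..T k}. \<forall>\<omega>\<in>space M.
       (let xm1 = (if k = 1 then x0 else xin (k - 1) (T (k - 1) - 1) \<omega>);
            xm2 = (if t = 1 then xm1 else xin k (t - 2) \<omega>);
            ut = xin k (t - 1) \<omega> + alpha k t *\<^sub>R (xin k (t - 1) \<omega> - xm2) in
        is_arg_min (\<lambda>w. h w - (Alin ut \<bullet> w) + q k t * bregman zeta (zeta' (zin k (t - 1) \<omega>)) (zin k (t - 1) \<omega>) w)
                   (\<lambda>w. w \<in> Zs) (zin k t \<omega>)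
        \<and> is_arg_min (\<lambda>u. mu * nu u + (v k \<omega> + adjoint Alin (zin k t \<omega>)) \<bullet> u
                         + eta k t * bregman nu (nu' (xin k (t - 1) \<omega>)) (xin k (t - 1) \<omega>) u
                         + p k * bregman nu (nu' (x (k - 1) \<omega>)) (x (k - 1) \<omega>) u)
                   (\<lambda>u. u \<in> Xs) (xin k t \<omega>))"
    "\<forall>k\<in>{1..N}. \<forall>\<omega>\<in>space M. x k \<omega> = xin k (T k) \<omega> \<and> z k \<omega> = zin k (T k) \<omega>
        \<and> xh k \<omega> = (1 / real (T k)) *\<^sub>R (\<Sum>t=1..T k. xin k t \<omega>)"
  and \<comment> \<open>probabilistic structure\<close>
    "prob_space M"
    "\<forall>k. x k \<in> borel_measurable M \<and> xh k \<in> borel_measurable M \<and> y k \<in> borel_measurable M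
        \<and> g k \<in> borel_measurable M \<and> v k \<in> borel_measurable M \<and> z k \<in> borel_measurable M"
    "\<forall>k t. xin k t \<in> borel_measurable M \<and> zin k t \<in> borel_measurable M"
    \<comment> \<open>F k = information available before iteration k (filtration)\<close>
    "\<forall>k. subalgebra M (F k)" "\<forall>k j. j \<le> k \<longrightarrow> subalgebra (F k) (F j)"
    "\<forall>k\<ge>1. (\<forall>j<k. v j \<in> borel_measurable (F k)) \<and> y k \<in> borel_measurable (F k)
         \<and> x (k - 1) \<in> borel_measurable (F k) \<and> xh (k - 1) \<in> borel_measurable (F k)"
    \<comment> \<open>conditional unbiasedness and conditional variance bound\<close>
    "\<forall>k\<in>{1..N}. integrable M (v k) \<and> integrable M (\<lambda>\<omega>. (dual_norm nrm (v k \<omega> - y k \<omega>))\<^sup>2)"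
    "\<forall>k\<in>{1..N}. \<forall>b\<in>Basis. AE \<omega> in M. real_cond_exp M (F k) (\<lambda>\<omega>. v k \<omega> \<bullet> b) \<omega> = y k \<omega> \<bullet> b"
    "\<forall>k\<in>{1..N}. AE \<omega> in M. real_cond_exp M (F k) (\<lambda>\<omega>. (dual_norm nrm (v k \<omega> - y k \<omega>))\<^sup>2) \<omega> \<le> (sigma k)\<^sup>2"
    \<comment> \<open>finite second moments / existence of the expectations involved\<close>
    "\<forall>k\<in>{1..N}. integrable M (\<lambda>\<omega>. (norm (x (k - 1) \<omega>))\<^sup>2) \<and> integrable M (\<lambda>\<omega>. (norm (xh k \<omega>))\<^sup>2)
        \<and> integrable M (\<lambda>\<omega>. (norm (y k \<omega>))\<^sup>2) \<and> integrable M (\<lambda>\<omega>. (norm (v k \<omega>))\<^sup>2)"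
    "integrable M (\<lambda>\<omega>. \<Sum>k=1..N. beta k * (- (xh k \<omega> \<bullet> yy) + xx \<bullet> y k \<omega> + v k \<omega> \<bullet> (xh k \<omega> - xx)
         - conj_fun f (y k \<omega>) + conj_fun f yy
         + p k / real (T k) * (\<Sum>t=1..T k. bregman nu (nu' (x (k - 1) \<omega>)) (x (k - 1) \<omega>) (xin k t \<omega>))))"
    "integrable M (\<lambda>\<omega>. - beta N * ((x (N - 1) \<omega> - xh N \<omega>) \<bullet> (y N \<omega> - yy))
         + beta N * p N / 4 * (nrm (x (N - 1) \<omega> - xh N \<omega>))\<^sup>2
         - (\<Sum>k=1..N. beta k * (sigma k)\<^sup>2 / p k)
         + beta N * (tau N + 1) * bregman (conj_fun f) (g N \<omega>) (y N \<omega>) yy)"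
  and \<comment> \<open>the fixed comparison point\<close>
    "xx \<in> Xs" "yy \<in> conj_dom f"
  shows "(\<integral>\<omega>. (\<Sum>k=1..N. beta k * (- (xh k \<omega> \<bullet> yy) + xx \<bullet> y k \<omega> + v k \<omega> \<bullet> (xh k \<omega> - xx)
         - conj_fun f (y k \<omega>) + conj_fun f yy
         + p k / real (T k) * (\<Sum>t=1..T k. bregman nu (nu' (x (k - 1) \<omega>)) (x (k - 1) \<omega>) (xin k t \<omega>)))) \<partial>M)
     \<ge> (\<integral>\<omega>. (- beta N * ((x (N - 1) \<omega> - xh N \<omega>) \<bullet> (y N \<omega> - yy))
         + beta N * p N / 4 * (nrm (x (N - 1) \<omega> - xh N \<omega>))\<^sup>2
         - (\<Sum>k=1..N. beta k * (sigma k)\<^sup>2 / p k)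
         + beta N * (tau N + 1) * bregman (conj_fun f) (g N \<omega>) (y N \<omega>) yy) \<partial>M)"
proof -
  have traj: "pds_spp_trajectory nrm Xs nu nu' f gf Lt T beta p lam tau N (\<lambda>k. x k \<omega>) (\<lambda>k. xh k \<omega>)
      (\<lambda>k. y k \<omega>) (\<lambda>k. g k \<omega>) (\<lambda>k t. xin k t \<omega>)" if \<omega>: "\<omega> \<in> space M" for \<omega>
  proof -
    have init: "x 0 \<omega> = x0" "xh 0 \<omega> = x0" "y 0 \<omega> = y0" "g 0 \<omega> = g0"
      using assms(35) \<omega> by auto
    have dual: "is_arg_min (\<lambda>u. - ((x (k - 1) \<omega> + lam k *\<^sub>R (xh (k - 1) \<omega> - x (k - 2) \<omega>)) \<bullet> u)
        + conj_fun f u + tau k * bregman (conj_fun f) (g (k - 1) \<omega>) (y (k - 1) \<omega>) u) (\<lambda>u. u \<in> conj_dom f) (y k \<omega>)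
      \<and> g k \<omega> = (1 / (1 + tau k)) *\<^sub>R (x (k - 1) \<omega> + lam k *\<^sub>R (xh (k - 1) \<omega> - x (k - 2) \<omega>) + tau k *\<^sub>R g (k - 1) \<omega>)"
      if k: "k \<in> {1..N}" for k
    proof -
      have "(if k = 1 then x0 else x (k - 2) \<omega>) = x (k - 2) \<omega>"
        using init k by auto
      then show ?thesis
        using assms(36)[rule_format, OF k \<omega>] unfolding Let_def by simp
    qed
    have inner: "xin k t \<omega> \<in> Xs" if "k \<in> {1..N}" "t \<in> {1..T k}" for k t
      using assms(38)[rule_format, OF that \<omega>] unfolding Let_def is_arg_min_def by blast
    show ?thesis
      by unfold_locales (use assms(4,11-20,24,27-31,32,34,39) \<omega> init dual inner in auto)
  qed
  have shift: "(\<lambda>\<omega>. x (k - 1) \<omega> - xx) \<in> borel_measurable (F k)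
      \<and> integrable M (\<lambda>\<omega>. (norm (x (k - 1) \<omega> - xx))\<^sup>2)" if "k \<in> {1..N}" for k
    using assms(41,45,49) that prob_space.finite_measure[OF assms(40)]
    by (auto intro: finite_measure.integrable_norm_sq_diff_const)
  note noise = prob_space.expected_noise_ge[OF assms(40), where K = "{1..N}" and F = F
      and u = "\<lambda>k \<omega>. x (k - 1) \<omega> - xx" and v = v and y = y and n = nrm and sigma = sigma]
  have noise_int: "integrable M (\<lambda>\<omega>. \<Sum>k=1..N. beta k * ((v k \<omega> - y k \<omega>) \<bullet> (x (k - 1) \<omega> - xx))
        - beta k / p k * (dual_norm nrm (v k \<omega> - y k \<omega>))\<^sup>2)" (is "integrable M ?Q")
    using noise(1) shift assms(19,20,41,43,46-49) by (auto simp: less_imp_le)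
  have noise_ge: "- (\<Sum>k=1..N. beta k * (sigma k)\<^sup>2 / p k) \<le> lebesgue_integral M ?Q"
    using noise(2) shift assms(19,20,41,43,46-49) by (auto simp: less_imp_le)
  show ?thesis (is "lebesgue_integral M ?L \<ge> lebesgue_integral M ?R")
  proof (rule prob_space.integral_mono_add_noise[OF assms(40,50,51) noise_int _ noise_ge])
    fix \<omega> assume "\<omega> \<in> space M"
    then interpret pds_spp_trajectory nrm Xs nu nu' f gf Lt T beta p lam tau N "\<lambda>k. x k \<omega>" "\<lambda>k. xh k \<omega>"
      "\<lambda>k. y k \<omega>" "\<lambda>k. g k \<omega>" "\<lambda>k. v k \<omega>" "\<lambda>k t. xin k t \<omega>"
      by (rule traj)
    show "?R \<omega> + (\<Sum>k=1..N. beta k * (sigma k)\<^sup>2 / p k) + ?Q \<omega> \<le> ?L \<omega>"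
      using gap_sum_ge[OF assms(53), of xx] assms(26)
      by (simp add: gap_term_def prox_term_def potential_def noise_def)
  qed
qed

end
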